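(* Let $\mathcal{X}$ be a pospace. Then the trace poset $\overrightarrow{T}\mathcal{X}$ (the set of traces of $\mathcal{X}$ ordered by $f\leq g$ iff $g=u\star f\star v$ for some traces $u,v$), regarded as a category, is isomorphic to the factorization category $F\overrightarrow{P}(\mathcal{X})$ of the trace category of $\mathcal{X}$.
   Context: A pospace is a Hausdorff space $X$ with a partial order closed in $X\times X$, regarded as a directed space whose dipaths are the continuous order-preserving maps $[0,1]\to X$. A trace is a dipath modulo monotone (continuous, endpoint-preserving) reparametrization; $\star$ is concatenation of traces. The trace category $\overrightarrow{P}(\mathcal{X})$ has objects the points of $X$ and morphisms the traces, composed by concatenation. For a category $\mathcal{C}$, the factorization category $F\mathcal{C}$ has objects the morphisms of $\mathcal{C}$, a morphism from $f$ to $f'$ being a pair $(u,v)$ of morphisms of $\mathcal{C}$ with $ufv=f'$, with composition $(u,v)(u',v')=(u'u,vv')$ and identities $(1_x,1_y)$. A poset is viewed as a category with exactly one morphism $a\to b$ iff $a\le b$. *)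

theory Defs
  imports "HOL-Analysis.Analysis"
begin

record ('o, 'm) cat =
  Ob   :: "'o set"
  Ar   :: "'m set"
  Dom  :: "'m \<Rightarrow> 'o"
  Cod  :: "'m \<Rightarrow> 'o"
  Id   :: "'o \<Rightarrow> 'm"
  Comp :: "'m \<Rightarrow> 'm \<Rightarrow> 'm"   \<comment> \<open>Comp g f = g after f, defined when Cod f = Dom g\<close>

definition cat_iso :: "('o, 'm, 'x) cat_scheme \<Rightarrow> ('p, 'n, 'y) cat_scheme \<Rightarrow> bool" where
  "cat_iso C D \<longleftrightarrow> (\<exists>Fo Fa.
     bij_betw Fo (Ob C) (Ob D) \<and> bij_betw Fa (Ar C) (Ar D) \<and>
     (\<forall>f\<in>Ar C. Dom D (Fa f) = Fo (Dom C f) \<and> Cod D (Fa f) = Fo (Cod C f)) \<and>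
     (\<forall>x\<in>Ob C. Fa (Id C x) = Id D (Fo x)) \<and>
     (\<forall>f\<in>Ar C. \<forall>g\<in>Ar C. Cod C f = Dom C g \<longrightarrow> Fa (Comp C g f) = Comp D (Fa g) (Fa f)))"

definition poset_cat :: "'a set \<Rightarrow> ('a \<Rightarrow> 'a \<Rightarrow> bool) \<Rightarrow> ('a, 'a \<times> 'a) cat" where
  "poset_cat A le = \<lparr> Ob = A,
     Ar = {(a, b). a \<in> A \<and> b \<in> A \<and> le a b},
     Dom = fst, Cod = snd, Id = (\<lambda>a. (a, a)),
     Comp = (\<lambda>g f. (fst f, snd g)) \<rparr>"

text \<open>Factorization category: a morphism f \<rightarrow> f' is a pair (u,v) with f' = u \<circ> f \<circ> v;
  it is stored together with its domain f as the triple (f, u, v).\<close>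
definition fact_cat :: "('o, 'm, 'x) cat_scheme \<Rightarrow> ('m, 'm \<times> 'm \<times> 'm) cat" where
  "fact_cat C = \<lparr> Ob = Ar C,
     Ar = {(f, u, v). f \<in> Ar C \<and> u \<in> Ar C \<and> v \<in> Ar C \<and>
                      Dom C u = Cod C f \<and> Cod C v = Dom C f},
     Dom = (\<lambda>(f, u, v). f),
     Cod = (\<lambda>(f, u, v). Comp C u (Comp C f v)),
     Id = (\<lambda>f. (f, Id C (Cod C f), Id C (Dom C f))),
     Comp = (\<lambda>(f', u', v') (f, u, v). (f, Comp C u' u, Comp C v v')) \<rparr>"

definition pospace :: "'a topology \<Rightarrow> ('a \<Rightarrow> 'a \<Rightarrow> bool) \<Rightarrow> bool" where
  "pospace X le \<longleftrightarrow> Hausdorff_space X \<and>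
     (\<forall>x\<in>topspace X. le x x) \<and>
     (\<forall>x\<in>topspace X. \<forall>y\<in>topspace X. le x y \<and> le y x \<longrightarrow> x = y) \<and>
     (\<forall>x\<in>topspace X. \<forall>y\<in>topspace X. \<forall>z\<in>topspace X. le x y \<and> le y z \<longrightarrow> le x z) \<and>
     closedin (prod_topology X X) {(x, y). x \<in> topspace X \<and> y \<in> topspace X \<and> le x y}"

definition dipath :: "'a topology \<Rightarrow> ('a \<Rightarrow> 'a \<Rightarrow> bool) \<Rightarrow> (real \<Rightarrow> 'a) \<Rightarrow> bool" where
  "dipath X le p \<longleftrightarrow> continuous_map (top_of_set {0..1}) X p \<and>
     (\<forall>s t. 0 \<le> s \<and> s \<le> t \<and> t \<le> 1 \<longrightarrow> le (p s) (p t))"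

definition reparam :: "(real \<Rightarrow> real) \<Rightarrow> bool" where
  "reparam \<phi> \<longleftrightarrow> continuous_on {0..1} \<phi> \<and> \<phi> ` {0..1} \<subseteq> {0..1} \<and>
     mono_on {0..1} \<phi> \<and> \<phi> 0 = 0 \<and> \<phi> 1 = 1"

definition reparam_rel :: "'a topology \<Rightarrow> ('a \<Rightarrow> 'a \<Rightarrow> bool) \<Rightarrow> (real \<Rightarrow> 'a) \<Rightarrow> (real \<Rightarrow> 'a) \<Rightarrow> bool" where
  "reparam_rel X le p q \<longleftrightarrow> dipath X le p \<and> dipath X le q \<and>
     (\<exists>\<phi>. reparam \<phi> \<and> (\<forall>t\<in>{0..1}. q t = p (\<phi> t)))"

definition trace_of :: "'a topology \<Rightarrow> ('a \<Rightarrow> 'a \<Rightarrow> bool) \<Rightarrow> (real \<Rightarrow> 'a) \<Rightarrow> (real \<Rightarrow> 'a) set" where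
  "trace_of X le p = {q. equivclp (reparam_rel X le) p q}"

definition traces :: "'a topology \<Rightarrow> ('a \<Rightarrow> 'a \<Rightarrow> bool) \<Rightarrow> (real \<Rightarrow> 'a) set set" where
  "traces X le = {trace_of X le p | p. dipath X le p}"

definition tsrc :: "(real \<Rightarrow> 'a) set \<Rightarrow> 'a" where
  "tsrc T = (SOME p. p \<in> T) 0"

definition ttgt :: "(real \<Rightarrow> 'a) set \<Rightarrow> 'a" where
  "ttgt T = (SOME p. p \<in> T) 1"

text \<open>Concatenation of paths (same formula as joinpaths, which requires a topological type class).\<close>
definition pjoin :: "(real \<Rightarrow> 'a) \<Rightarrow> (real \<Rightarrow> 'a) \<Rightarrow> real \<Rightarrow> 'a" where
  "pjoin p q = (\<lambda>t. if t \<le> 1/2 then p (2 * t) else q (2 * t - 1))"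

definition tcat :: "'a topology \<Rightarrow> ('a \<Rightarrow> 'a \<Rightarrow> bool) \<Rightarrow> (real \<Rightarrow> 'a) set \<Rightarrow> (real \<Rightarrow> 'a) set \<Rightarrow> (real \<Rightarrow> 'a) set" where
  "tcat X le A B = {r. \<exists>p\<in>A. \<exists>q\<in>B. equivclp (reparam_rel X le) (pjoin p q) r}"

definition trace_cat :: "'a topology \<Rightarrow> ('a \<Rightarrow> 'a \<Rightarrow> bool) \<Rightarrow> ('a, (real \<Rightarrow> 'a) set) cat" where
  "trace_cat X le = \<lparr> Ob = topspace X, Ar = traces X le,
     Dom = tsrc, Cod = ttgt,
     Id = (\<lambda>x. trace_of X le (\<lambda>t. x)),
     Comp = (\<lambda>g f. tcat X le f g) \<rparr>"

definition trace_le :: "'a topology \<Rightarrow> ('a \<Rightarrow> 'a \<Rightarrow> bool) \<Rightarrow> (real \<Rightarrow> 'a) set \<Rightarrow> (real \<Rightarrow> 'a) set \<Rightarrow> bool" where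
  "trace_le X le f g \<longleftrightarrow> (\<exists>u\<in>traces X le. \<exists>v\<in>traces X le.
     ttgt u = tsrc f \<and> ttgt f = tsrc v \<and> g = tcat X le (tcat X le u f) v)"

end

theory Submission
  imports Defs
begin

text \<open>In any category, the factorization category is isomorphic to the divisibility preorder
  on morphisms (f \<le> g iff g = u f v for some u, v) as soon as such factorizations are unique, and
  for traces in a pospace they are. Truncating a dipath at the last time it lies below a point a
  is compatible with reparametrization (this time exists because the order is closed), and
  truncating v \<star> g at the end point of v gives back v: after that time g stays above that point,
  so by antisymmetry the truncated part is constant. Hence v \<star> g = v' \<star> g' implies v = v' when
  v and v' end at the same point. The symmetric cancellation law follows by reversing paths, which
  replaces the order by its converse.\<close>

section \<open>Categories with unique factorizations\<close>

locale category =
  fixes C :: "('o, 'm, 'x) cat_scheme"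
  assumes Dom_in_Ob: "f \<in> Ar C \<Longrightarrow> Dom C f \<in> Ob C"
    and Cod_in_Ob: "f \<in> Ar C \<Longrightarrow> Cod C f \<in> Ob C"
    and Id_in_Ar: "x \<in> Ob C \<Longrightarrow> Id C x \<in> Ar C"
    and Dom_Id: "x \<in> Ob C \<Longrightarrow> Dom C (Id C x) = x"
    and Cod_Id: "x \<in> Ob C \<Longrightarrow> Cod C (Id C x) = x"
    and Comp_in_Ar: "\<lbrakk>f \<in> Ar C; g \<in> Ar C; Cod C f = Dom C g\<rbrakk> \<Longrightarrow> Comp C g f \<in> Ar C"
    and Dom_Comp: "\<lbrakk>f \<in> Ar C; g \<in> Ar C; Cod C f = Dom C g\<rbrakk> \<Longrightarrow> Dom C (Comp C g f) = Dom C f"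
    and Cod_Comp: "\<lbrakk>f \<in> Ar C; g \<in> Ar C; Cod C f = Dom C g\<rbrakk> \<Longrightarrow> Cod C (Comp C g f) = Cod C g"
    and Comp_Id_left: "f \<in> Ar C \<Longrightarrow> Comp C (Id C (Cod C f)) f = f"
    and Comp_Id_right: "f \<in> Ar C \<Longrightarrow> Comp C f (Id C (Dom C f)) = f"
    and Comp_assoc: "\<lbrakk>f \<in> Ar C; g \<in> Ar C; h \<in> Ar C; Cod C f = Dom C g; Cod C g = Dom C h\<rbrakk>
      \<Longrightarrow> Comp C h (Comp C g f) = Comp C (Comp C h g) f"

definition factorizations :: "('o, 'm, 'x) cat_scheme \<Rightarrow> 'm \<Rightarrow> 'm \<Rightarrow> ('m \<times> 'm) set" where
  "factorizations C f g = {(u, v). u \<in> Ar C \<and> v \<in> Ar C \<and> Dom C u = Cod C f \<and> Cod C v = Dom C f \<and>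
     g = Comp C u (Comp C f v)}"

definition factor_le :: "('o, 'm, 'x) cat_scheme \<Rightarrow> 'm \<Rightarrow> 'm \<Rightarrow> bool" where
  "factor_le C f g \<longleftrightarrow> factorizations C f g \<noteq> {}"

context category
begin

lemma factorizations_Ar:
  assumes "f \<in> Ar C" "(u, v) \<in> factorizations C f g"
  shows "g \<in> Ar C" "Dom C g = Dom C v" "Cod C g = Cod C u"
proof -
  have uv: "u \<in> Ar C" "v \<in> Ar C" "Dom C u = Cod C f" "Cod C v = Dom C f" "g = Comp C u (Comp C f v)"
    using assms(2) by (auto simp: factorizations_def)
  have fv: "Comp C f v \<in> Ar C" "Dom C (Comp C f v) = Dom C v" "Cod C (Comp C f v) = Cod C f"
    using Comp_in_Ar Dom_Comp Cod_Comp assms(1) uv by auto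
  show "g \<in> Ar C" "Dom C g = Dom C v" "Cod C g = Cod C u"
    using Comp_in_Ar Dom_Comp Cod_Comp fv uv by auto
qed

lemma Id_factorization:
  assumes "f \<in> Ar C"
  shows "(Id C (Cod C f), Id C (Dom C f)) \<in> factorizations C f f"
  using assms by (simp add: factorizations_def Id_in_Ar Dom_in_Ob Cod_in_Ob Dom_Id Cod_Id
      Comp_Id_left Comp_Id_right)

lemma factorizations_Comp:
  assumes f: "f \<in> Ar C" and fg: "(u, v) \<in> factorizations C f g"
      and gh: "(u', v') \<in> factorizations C g h"
  shows "(Comp C u' u, Comp C v v') \<in> factorizations C f h"
proof -
  have uv: "u \<in> Ar C" "v \<in> Ar C" "Dom C u = Cod C f" "Cod C v = Dom C f" "g = Comp C u (Comp C f v)"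
    using fg by (auto simp: factorizations_def)
  have uv': "u' \<in> Ar C" "v' \<in> Ar C" "Dom C u' = Cod C g" "Cod C v' = Dom C g"
      "h = Comp C u' (Comp C g v')"
    using gh by (auto simp: factorizations_def)
  have g: "Dom C g = Dom C v" "Cod C g = Cod C u" using factorizations_Ar[OF f fg] by auto
  have fv: "Comp C f v \<in> Ar C" "Dom C (Comp C f v) = Dom C v" "Cod C (Comp C f v) = Cod C f"
    using Comp_in_Ar Dom_Comp Cod_Comp f uv by auto
  have vv': "Comp C v v' \<in> Ar C" "Dom C (Comp C v v') = Dom C v'" "Cod C (Comp C v v') = Dom C f"
    using Comp_in_Ar Dom_Comp Cod_Comp uv uv' g by auto
  have u'u: "Comp C u' u \<in> Ar C" "Dom C (Comp C u' u) = Cod C f"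
    using Comp_in_Ar Dom_Comp uv uv' g by auto
  have fvv': "Comp C f (Comp C v v') \<in> Ar C" "Cod C (Comp C f (Comp C v v')) = Cod C f"
    using Comp_in_Ar Cod_Comp f vv' by auto
  have "h = Comp C u' (Comp C (Comp C u (Comp C f v)) v')" using uv uv' by simp
  also have "Comp C (Comp C u (Comp C f v)) v' = Comp C u (Comp C (Comp C f v) v')"
    by (rule Comp_assoc[symmetric]) (use uv uv' fv g in auto)
  also have "Comp C (Comp C f v) v' = Comp C f (Comp C v v')"
    by (rule Comp_assoc[symmetric]) (use f uv uv' g in auto)
  also have "Comp C u' (Comp C u (Comp C f (Comp C v v')))
        = Comp C (Comp C u' u) (Comp C f (Comp C v v'))"
    by (rule Comp_assoc) (use uv uv' fvv' g in auto)
  finally show ?thesis using u'u vv' uv by (simp add: factorizations_def)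
qed

end

definition factorization_arrow :: "('o, 'm, 'x) cat_scheme \<Rightarrow> 'm \<times> 'm \<Rightarrow> 'm \<times> 'm \<times> 'm" where
  "factorization_arrow C = (\<lambda>(f, g). (f, THE uv. uv \<in> factorizations C f g))"

locale unique_factorization_category = category +
  assumes factorization_unique:
    "\<lbrakk>f \<in> Ar C; uv \<in> factorizations C f g; uv' \<in> factorizations C f g\<rbrakk> \<Longrightarrow> uv = uv'"
begin

lemma factorization_arrow_eq:
  assumes "f \<in> Ar C" "(u, v) \<in> factorizations C f g"
  shows "factorization_arrow C (f, g) = (f, u, v)"
  using assms factorization_unique by (auto simp: factorization_arrow_def intro!: the_equality)

lemma poset_cat_ArE:
  assumes "a \<in> Ar (poset_cat (Ar C) (factor_le C))"
  obtains f g u v where "a = (f, g)" "f \<in> Ar C" "(u, v) \<in> factorizations C f g"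
    "factorization_arrow C a = (f, u, v)"
  using assms by (auto simp: poset_cat_def factor_le_def factorization_arrow_eq)

lemma bij_betw_factorization_arrow:
  "bij_betw (factorization_arrow C) (Ar (poset_cat (Ar C) (factor_le C))) (Ar (fact_cat C))"
proof (rule bij_betw_byWitness[where f' = "\<lambda>(f, u, v). (f, Comp C u (Comp C f v))"])
  show "\<forall>a \<in> Ar (poset_cat (Ar C) (factor_le C)).
      (\<lambda>(f, u, v). (f, Comp C u (Comp C f v))) (factorization_arrow C a) = a"
    by (auto elim!: poset_cat_ArE simp: factorizations_def)
  show "\<forall>a \<in> Ar (fact_cat C). factorization_arrow C ((\<lambda>(f, u, v). (f, Comp C u (Comp C f v))) a) = a"
    by (auto simp: fact_cat_def factorization_arrow_eq factorizations_def)
  show "factorization_arrow C ` Ar (poset_cat (Ar C) (factor_le C)) \<subseteq> Ar (fact_cat C)"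
    by (auto elim!: poset_cat_ArE simp: fact_cat_def factorizations_def)
  show "(\<lambda>(f, u, v). (f, Comp C u (Comp C f v))) ` Ar (fact_cat C)
        \<subseteq> Ar (poset_cat (Ar C) (factor_le C))"
    using factorizations_Ar(1)
    by (fastforce simp: poset_cat_def fact_cat_def factor_le_def factorizations_def)
qed

theorem cat_iso_factor_poset_fact_cat: "cat_iso (poset_cat (Ar C) (factor_le C)) (fact_cat C)"
proof -
  let ?P = "poset_cat (Ar C) (factor_le C)" and ?F = "factorization_arrow C"
  have "Dom (fact_cat C) (?F a) = Dom ?P a \<and> Cod (fact_cat C) (?F a) = Cod ?P a"
    if a: "a \<in> Ar ?P" for a
  proof -
    obtain f g u v where "a = (f, g)" "(u, v) \<in> factorizations C f g" "?F a = (f, u, v)"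
      using a by (rule poset_cat_ArE)
    then show ?thesis by (simp add: poset_cat_def fact_cat_def factorizations_def)
  qed
  moreover have "?F (Id ?P f) = Id (fact_cat C) f" if "f \<in> Ar C" for f
    using factorization_arrow_eq[OF that Id_factorization[OF that]]
    by (simp add: poset_cat_def fact_cat_def)
  moreover have "?F (Comp ?P b a) = Comp (fact_cat C) (?F b) (?F a)"
    if a: "a \<in> Ar ?P" and b: "b \<in> Ar ?P" and ab: "Cod ?P a = Dom ?P b" for a b
  proof -
    obtain f g u v where a': "a = (f, g)" "f \<in> Ar C" "(u, v) \<in> factorizations C f g" "?F a = (f, u, v)"
      using a by (rule poset_cat_ArE)
    obtain g' h u' v' where b': "b = (g', h)" "(u', v') \<in> factorizations C g' h" "?F b = (g', u', v')"
      using b by (rule poset_cat_ArE)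
    have "g' = g" using ab a'(1) b'(1) by (simp add: poset_cat_def)
    then show ?thesis
      using a' b' factorizations_Comp factorization_arrow_eq by (simp add: poset_cat_def fact_cat_def)
  qed
  ultimately show ?thesis
    using bij_betw_factorization_arrow unfolding cat_iso_def
    by (intro exI[of _ id] exI[of _ ?F]) (simp add: poset_cat_def fact_cat_def)
qed

end

section \<open>Dipaths and traces in a pospace\<close>

lemma pospace_refl: "pospace X le \<Longrightarrow> x \<in> topspace X \<Longrightarrow> le x x"
  unfolding pospace_def by blast

lemma pospace_antisym:
  "pospace X le \<Longrightarrow> x \<in> topspace X \<Longrightarrow> y \<in> topspace X \<Longrightarrow> le x y \<Longrightarrow> le y x \<Longrightarrow> x = y"
  unfolding pospace_def by blast

lemma pospace_trans:
  "\<lbrakk>pospace X le; x \<in> topspace X; y \<in> topspace X; z \<in> topspace X; le x y; le y z\<rbrakk> \<Longrightarrow> le x z"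
  unfolding pospace_def by blast

lemma pospace_closedin:
  "pospace X le \<Longrightarrow> closedin (prod_topology X X) {(x, y). x \<in> topspace X \<and> y \<in> topspace X \<and> le x y}"
  unfolding pospace_def by blast

lemma pospace_converse:
  assumes "pospace X le"
  shows "pospace X (\<lambda>x y. le y x)"
proof -
  let ?G = "{(x, y). x \<in> topspace X \<and> y \<in> topspace X \<and> le x y}"
  have "continuous_map (prod_topology X X) (prod_topology X X) (\<lambda>(x, y). (y, x))"
    using homeomorphic_imp_continuous_map[OF homeomorphic_map_swap] .
  then have "closedin (prod_topology X X) {z \<in> topspace (prod_topology X X). (\<lambda>(x, y). (y, x)) z \<in> ?G}"
    using closedin_continuous_map_preimage pospace_closedin[OF assms] by blast
  moreover have "{z \<in> topspace (prod_topology X X). (\<lambda>(x, y). (y, x)) z \<in> ?G}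
      = {(x, y). x \<in> topspace X \<and> y \<in> topspace X \<and> le y x}"
    by auto
  ultimately have "closedin (prod_topology X X) {(x, y). x \<in> topspace X \<and> y \<in> topspace X \<and> le y x}"
    by simp
  moreover have "Hausdorff_space X" using assms unfolding pospace_def by blast
  ultimately show ?thesis
    unfolding pospace_def using pospace_refl[OF assms] pospace_antisym[OF assms] pospace_trans[OF assms]
    by blast
qed

lemma dipath_in_topspace: "dipath X le p \<Longrightarrow> t \<in> {0..1} \<Longrightarrow> p t \<in> topspace X"
  unfolding dipath_def continuous_map_def by auto

lemma dipath_mono: "dipath X le p \<Longrightarrow> 0 \<le> s \<Longrightarrow> s \<le> t \<Longrightarrow> t \<le> 1 \<Longrightarrow> le (p s) (p t)"
  unfolding dipath_def by auto

lemma continuous_map_compose_on: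
  assumes "continuous_map (top_of_set {0..1}) X p" "continuous_on S \<phi>" "\<phi> ` S \<subseteq> {0..1}"
  shows "continuous_map (top_of_set S) X (\<lambda>t. p (\<phi> t))"
proof -
  have "continuous_map (top_of_set S) (top_of_set {0..1}) \<phi>"
    using assms(2,3) by auto
  from continuous_map_compose[OF this assms(1)] show ?thesis by (simp add: o_def)
qed

lemma dipath_cong:
  assumes p: "dipath X le p" and q: "\<And>t. t \<in> {0..1} \<Longrightarrow> q t = p t"
  shows "dipath X le q"
proof -
  have "continuous_map (top_of_set {0..1}) X q"
    by (rule continuous_map_eq[of _ _ p]) (use p q in \<open>auto simp: dipath_def\<close>)
  then show ?thesis using p q unfolding dipath_def by simp
qed

lemma dipath_compose:
  assumes p: "dipath X le p" and \<phi>: "continuous_on {0..1} \<phi>" "\<phi> ` {0..1} \<subseteq> {0..1}" "mono_on {0..1} \<phi>"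
  shows "dipath X le (\<lambda>t. p (\<phi> t))"
proof -
  have "continuous_map (top_of_set {0..1}) X (\<lambda>t. p (\<phi> t))"
    using p \<phi>(1,2) continuous_map_compose_on unfolding dipath_def by blast
  moreover have "le (p (\<phi> s)) (p (\<phi> t))" if "0 \<le> s" "s \<le> t" "t \<le> 1" for s t
    using \<phi>(2,3) that by (intro dipath_mono[OF p]) (auto simp: mono_on_def image_subset_iff)
  ultimately show ?thesis unfolding dipath_def by simp
qed

lemma dipath_const: "pospace X le \<Longrightarrow> x \<in> topspace X \<Longrightarrow> dipath X le (\<lambda>t. x)"
  unfolding dipath_def by (simp add: pospace_refl continuous_map_const)

lemma continuous_map_pjoin:
  assumes p: "continuous_map (top_of_set {0..1}) X p" and q: "continuous_map (top_of_set {0..1}) X q"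
    and pq: "p 1 = q 0"
  shows "continuous_map (top_of_set {0..1}) X (pjoin p q)"
  unfolding pjoin_def
proof (rule continuous_map_cases_le)
  have "continuous_map (top_of_set ({0..1} \<inter> {x. x \<in> {0..1} \<and> x \<le> 1/2})) X (\<lambda>t. p (2 * t))"
    by (rule continuous_map_compose_on[OF p]) (auto intro!: continuous_intros)
  then show "continuous_map (subtopology (top_of_set {0..1}) {x \<in> topspace (top_of_set {0..1}). x \<le> 1/2})
      X (\<lambda>t. p (2 * t))"
    by (simp add: subtopology_subtopology)
  have "continuous_map (top_of_set ({0..1} \<inter> {x. x \<in> {0..1} \<and> 1/2 \<le> x})) X (\<lambda>t. q (2 * t - 1))"
    by (rule continuous_map_compose_on[OF q]) (auto intro!: continuous_intros)
  then show "continuous_map (subtopology (top_of_set {0..1}) {x \<in> topspace (top_of_set {0..1}). 1/2 \<le> x})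
      X (\<lambda>t. q (2 * t - 1))"
    by (simp add: subtopology_subtopology)
  show "p (2 * t) = q (2 * t - 1)" if "t = 1/2" for t
    unfolding that using pq by simp
qed simp_all

lemma dipath_pjoin:
  assumes pos: "pospace X le" and p: "dipath X le p" and q: "dipath X le q" and pq: "p 1 = q 0"
  shows "dipath X le (pjoin p q)"
proof -
  have "le (pjoin p q s) (pjoin p q t)" if "0 \<le> s" "s \<le> t" "t \<le> 1" for s t
  proof -
    consider "t \<le> 1/2" | "s \<le> 1/2" "1/2 < t" | "1/2 < s" using that by linarith
    then show ?thesis
    proof cases
      case 1
      then show ?thesis using that dipath_mono[OF p, of "2 * s" "2 * t"] by (simp add: pjoin_def)
    next
      case 2
      have "le (p (2 * s)) (p 1)" "le (p 1) (q (2 * t - 1))"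
        using 2 that dipath_mono[OF p, of "2 * s" 1] dipath_mono[OF q, of 0 "2 * t - 1"] pq by auto
      moreover have "p (2 * s) \<in> topspace X" "p 1 \<in> topspace X" "q (2 * t - 1) \<in> topspace X"
        using 2 that dipath_in_topspace[OF p] dipath_in_topspace[OF q] by auto
      ultimately have "le (p (2 * s)) (q (2 * t - 1))"
        using pospace_trans[OF pos] by blast
      then show ?thesis using 2 by (simp add: pjoin_def)
    next
      case 3
      then show ?thesis
        using that dipath_mono[OF q, of "2 * s - 1" "2 * t - 1"] by (simp add: pjoin_def)
    qed
  qed
  moreover have "continuous_map (top_of_set {0..1}) X (pjoin p q)"
    using p q pq by (intro continuous_map_pjoin) (auto simp: dipath_def)
  ultimately show ?thesis unfolding dipath_def by blast
qed

lemma reparamI: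
  assumes "continuous_on {0..1} \<phi>" "\<And>t. 0 \<le> t \<Longrightarrow> t \<le> 1 \<Longrightarrow> 0 \<le> \<phi> t \<and> \<phi> t \<le> 1"
    "\<And>s t. 0 \<le> s \<Longrightarrow> s \<le> t \<Longrightarrow> t \<le> 1 \<Longrightarrow> \<phi> s \<le> \<phi> t" "\<phi> 0 = 0" "\<phi> 1 = 1"
  shows "reparam \<phi>"
  using assms unfolding reparam_def mono_on_def by (auto simp: image_subset_iff)

lemma reparamD:
  assumes "reparam \<phi>"
  shows "continuous_on {0..1} \<phi>" "\<And>t. 0 \<le> t \<Longrightarrow> t \<le> 1 \<Longrightarrow> 0 \<le> \<phi> t"
    "\<And>t. 0 \<le> t \<Longrightarrow> t \<le> 1 \<Longrightarrow> \<phi> t \<le> 1"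
    "\<And>s t. 0 \<le> s \<Longrightarrow> s \<le> t \<Longrightarrow> t \<le> 1 \<Longrightarrow> \<phi> s \<le> \<phi> t" "\<phi> 0 = 0" "\<phi> 1 = 1"
  using assms unfolding reparam_def mono_on_def by (auto simp: image_subset_iff)

lemma reparam_id: "reparam (\<lambda>t. t)"
  by (rule reparamI) auto

lemma reparam_relI:
  assumes p: "dipath X le p" and \<phi>: "reparam \<phi>" and q: "\<And>t. t \<in> {0..1} \<Longrightarrow> q t = p (\<phi> t)"
  shows "reparam_rel X le p q"
proof -
  have "dipath X le (\<lambda>t. p (\<phi> t))"
    using \<phi> by (intro dipath_compose[OF p]) (auto simp: reparam_def)
  then have "dipath X le q" using q by (rule dipath_cong)
  then show ?thesis unfolding reparam_rel_def using p \<phi> q by blast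
qed

lemma reparam_relE:
  assumes "reparam_rel X le p q"
  obtains \<phi> where "dipath X le p" "dipath X le q" "reparam \<phi>" "\<And>t. t \<in> {0..1} \<Longrightarrow> q t = p (\<phi> t)"
  using assms unfolding reparam_rel_def by blast

lemma reparam_rel_refl: "dipath X le p \<Longrightarrow> reparam_rel X le p p"
  using reparam_relI[OF _ reparam_id] by blast

lemma reparam_relD: "reparam_rel X le p q \<Longrightarrow> dipath X le p \<and> dipath X le q \<and> q 0 = p 0 \<and> q 1 = p 1"
  by (elim reparam_relE) (auto simp: reparam_def)

abbreviation same_trace :: "'a topology \<Rightarrow> ('a \<Rightarrow> 'a \<Rightarrow> bool) \<Rightarrow> (real \<Rightarrow> 'a) \<Rightarrow> (real \<Rightarrow> 'a) \<Rightarrow> bool" where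
  "same_trace X le \<equiv> equivclp (reparam_rel X le)"

lemma equivclp_map:
  assumes "equivclp R x y" "I x"
    and "\<And>a b. R a b \<Longrightarrow> I a \<longleftrightarrow> I b"
    and "\<And>a b. R a b \<Longrightarrow> I a \<Longrightarrow> S (F a) (F b)"
  shows "equivclp S (F x) (F y)"
proof -
  from assms(1) have "I y \<and> equivclp S (F x) (F y)"
  proof (induction rule: equivclp_induct)
    case base
    then show ?case using assms(2) by simp
  next
    case (step y z)
    from step(2) show ?case
    proof
      assume "R y z"
      then show ?thesis using step(3) assms(3,4) by (blast intro: equivclp_into_equivclp)
    next
      assume "R z y"
      then show ?thesis using step(3) assms(3,4) by (blast intro: equivclp_into_equivclp)
    qed
  qed
  then show ?thesis ..
qed

lemma same_trace_dipath:
  assumes "same_trace X le p q" "dipath X le p"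
  shows "dipath X le q" "q 0 = p 0" "q 1 = p 1"
proof -
  from assms have "dipath X le q \<and> q 0 = p 0 \<and> q 1 = p 1"
    by (induction rule: equivclp_induct) (auto dest: reparam_relD)
  then show "dipath X le q" "q 0 = p 0" "q 1 = p 1" by auto
qed

lemma trace_of_eq_iff: "trace_of X le p = trace_of X le q \<longleftrightarrow> same_trace X le p q"
proof
  assume "trace_of X le p = trace_of X le q"
  then show "same_trace X le p q" unfolding trace_of_def by (metis equivclp_refl mem_Collect_eq)
next
  assume "same_trace X le p q"
  then show "trace_of X le p = trace_of X le q"
    unfolding trace_of_def by (blast intro: equivclp_trans equivclp_sym)
qed

lemma tracesE:
  assumes "A \<in> traces X le"
  obtains p where "dipath X le p" "A = trace_of X le p"
  using assms unfolding traces_def by blast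

lemma trace_of_in_traces: "dipath X le p \<Longrightarrow> trace_of X le p \<in> traces X le"
  unfolding traces_def by blast

lemma same_trace_some_trace_of: "same_trace X le p (SOME q. q \<in> trace_of X le p)"
  using someI[of "\<lambda>q. q \<in> trace_of X le p" p] by (simp add: trace_of_def)

lemma tsrc_trace_of: "dipath X le p \<Longrightarrow> tsrc (trace_of X le p) = p 0"
  unfolding tsrc_def using same_trace_dipath(2)[OF same_trace_some_trace_of] .

lemma ttgt_trace_of: "dipath X le p \<Longrightarrow> ttgt (trace_of X le p) = p 1"
  unfolding ttgt_def using same_trace_dipath(3)[OF same_trace_some_trace_of] .

lemma reparam_concat:
  assumes \<phi>: "reparam \<phi>" and \<psi>: "reparam \<psi>"
  shows "reparam (\<lambda>t. \<phi> (min (2 * t) 1) / 2 + \<psi> (max (2 * t - 1) 0) / 2)" (is "reparam ?\<theta>")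
proof (rule reparamI)
  have "continuous_on {0..1} (\<lambda>t. \<phi> (min (2 * t) 1))"
    by (rule continuous_on_compose2[OF reparamD(1)[OF \<phi>]]) (auto intro!: continuous_intros)
  moreover have "continuous_on {0..1} (\<lambda>t. \<psi> (max (2 * t - 1) 0))"
    by (rule continuous_on_compose2[OF reparamD(1)[OF \<psi>]]) (auto intro!: continuous_intros)
  ultimately show "continuous_on {0..1} ?\<theta>" by (intro continuous_intros) auto
  show "0 \<le> ?\<theta> t \<and> ?\<theta> t \<le> 1" if "0 \<le> t" "t \<le> 1" for t
    using that reparamD(2,3)[OF \<phi>, of "min (2 * t) 1"] reparamD(2,3)[OF \<psi>, of "max (2 * t - 1) 0"]
    by simp
  show "?\<theta> s \<le> ?\<theta> t" if "0 \<le> s" "s \<le> t" "t \<le> 1" for s t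
  proof -
    have "\<phi> (min (2 * s) 1) \<le> \<phi> (min (2 * t) 1)" "\<psi> (max (2 * s - 1) 0) \<le> \<psi> (max (2 * t - 1) 0)"
      using that by (auto intro!: reparamD(4)[OF \<phi>] reparamD(4)[OF \<psi>])
    then show ?thesis by simp
  qed
  show "?\<theta> 0 = 0" "?\<theta> 1 = 1"
    using reparamD(5,6)[OF \<phi>] reparamD(5,6)[OF \<psi>] by simp_all
qed

lemma reparam_rel_pjoin:
  assumes pos: "pospace X le" and pp': "reparam_rel X le p p'" and qq': "reparam_rel X le q q'"
    and pq: "p 1 = q 0"
  shows "reparam_rel X le (pjoin p q) (pjoin p' q')"
proof -
  obtain \<phi> where p: "dipath X le p" "dipath X le p'" and \<phi>: "reparam \<phi>"
    and p': "\<And>t. t \<in> {0..1} \<Longrightarrow> p' t = p (\<phi> t)"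
    by (rule reparam_relE[OF pp']) blast
  obtain \<psi> where q: "dipath X le q" "dipath X le q'" and \<psi>: "reparam \<psi>"
    and q': "\<And>t. t \<in> {0..1} \<Longrightarrow> q' t = q (\<psi> t)"
    by (rule reparam_relE[OF qq']) blast
  define \<theta> where "\<theta> t = \<phi> (min (2 * t) 1) / 2 + \<psi> (max (2 * t - 1) 0) / 2" for t
  have "reparam \<theta>" unfolding \<theta>_def by (rule reparam_concat[OF \<phi> \<psi>])
  moreover have "pjoin p' q' t = pjoin p q (\<theta> t)" if t: "t \<in> {0..1}" for t
  proof (cases "t \<le> 1/2")
    case True
    then have \<theta>: "2 * \<theta> t = \<phi> (2 * t)" "\<theta> t \<le> 1/2"
      using t reparamD(3,5)[OF \<phi>] reparamD(5)[OF \<psi>] by (auto simp: \<theta>_def)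
    have "pjoin p q (\<theta> t) = p (2 * \<theta> t)" using \<theta>(2) by (simp add: pjoin_def)
    also have "\<dots> = p' (2 * t)" using \<theta>(1) p' True t by simp
    also have "\<dots> = pjoin p' q' t" using True by (simp add: pjoin_def)
    finally show ?thesis ..
  next
    case False
    then have \<theta>: "\<theta> t = 1/2 + \<psi> (2 * t - 1) / 2" "0 \<le> \<psi> (2 * t - 1)"
      using t reparamD(6)[OF \<phi>] reparamD(2)[OF \<psi>] by (auto simp: \<theta>_def)
    show ?thesis
    proof (cases "\<psi> (2 * t - 1) = 0")
      case True
      then have "\<theta> t = 1/2" using \<theta> by simp
      then have "pjoin p q (\<theta> t) = p 1" by (simp only:) (simp add: pjoin_def)
      then show ?thesis using True False t q'[of "2 * t - 1"] pq by (simp add: pjoin_def)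
    next
      case False
      then show ?thesis using \<open>\<not> t \<le> 1/2\<close> t \<theta> q'[of "2 * t - 1"] by (simp add: pjoin_def)
    qed
  qed
  ultimately show ?thesis using reparam_relI[OF dipath_pjoin[OF pos p(1) q(1) pq]] by blast
qed

lemma same_trace_pjoin:
  assumes pos: "pospace X le" and pp': "same_trace X le p p'" and qq': "same_trace X le q q'"
    and p: "dipath X le p" and q: "dipath X le q" and pq: "p 1 = q 0"
  shows "same_trace X le (pjoin p q) (pjoin p' q')"
proof -
  have "same_trace X le (pjoin p q) (pjoin p' q)"
  proof (rule equivclp_map[where F = "\<lambda>p. pjoin p q" and I = "\<lambda>p. p 1 = q 0", OF pp' pq])
    show "a 1 = q 0 \<longleftrightarrow> b 1 = q 0" if "reparam_rel X le a b" for a b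
      using reparam_relD[OF that] by simp
    show "reparam_rel X le (pjoin a q) (pjoin b q)" if "reparam_rel X le a b" "a 1 = q 0" for a b
      using reparam_rel_pjoin[OF pos that(1) reparam_rel_refl[OF q] that(2)] .
  qed
  also have "same_trace X le (pjoin p' q) (pjoin p' q')"
  proof (rule equivclp_map[where F = "pjoin p'" and I = "\<lambda>q. p' 1 = q 0", OF qq'])
    show "p' 1 = q 0" using same_trace_dipath[OF pp' p] pq by simp
    show "p' 1 = a 0 \<longleftrightarrow> p' 1 = b 0" if "reparam_rel X le a b" for a b
      using reparam_relD[OF that] by simp
    show "reparam_rel X le (pjoin p' a) (pjoin p' b)" if "reparam_rel X le a b" "p' 1 = a 0" for a b
      using reparam_rel_pjoin[OF pos reparam_rel_refl[OF same_trace_dipath(1)[OF pp' p]] that] .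
  qed
  finally show ?thesis .
qed

lemma tcat_trace_of:
  assumes pos: "pospace X le" and p: "dipath X le p" and q: "dipath X le q" and pq: "p 1 = q 0"
  shows "tcat X le (trace_of X le p) (trace_of X le q) = trace_of X le (pjoin p q)"
proof (intro set_eqI iffI)
  fix r assume "r \<in> tcat X le (trace_of X le p) (trace_of X le q)"
  then obtain p' q' where "same_trace X le p p'" "same_trace X le q q'"
      "same_trace X le (pjoin p' q') r"
    unfolding tcat_def trace_of_def by blast
  then have "same_trace X le (pjoin p q) r"
    using same_trace_pjoin[OF pos _ _ p q pq] by (blast intro: equivclp_trans)
  then show "r \<in> trace_of X le (pjoin p q)" by (simp add: trace_of_def)
next
  fix r assume "r \<in> trace_of X le (pjoin p q)"
  moreover have "p \<in> trace_of X le p" "q \<in> trace_of X le q" by (simp_all add: trace_of_def)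
  ultimately show "r \<in> tcat X le (trace_of X le p) (trace_of X le q)"
    unfolding tcat_def trace_of_def by blast
qed

lemma reparam_rel_pjoin_assoc:
  assumes pos: "pospace X le" and a: "dipath X le a" and b: "dipath X le b" and c: "dipath X le c"
    and ab: "a 1 = b 0" and bc: "b 1 = c 0"
  shows "reparam_rel X le (pjoin (pjoin a b) c) (pjoin a (pjoin b c))"
proof -
  define \<phi> :: "real \<Rightarrow> real" where "\<phi> t = max (t/2) (max (t - 1/4) (2 * t - 1))" for t
  have "reparam \<phi>"
  proof (rule reparamI)
    show "continuous_on {0..1} \<phi>" unfolding \<phi>_def by (intro continuous_intros) auto
  qed (auto simp: \<phi>_def max_def)
  moreover have "pjoin a (pjoin b c) t = pjoin (pjoin a b) c (\<phi> t)" for t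
  proof -
    consider "t \<le> 1/2" | "1/2 < t" "t \<le> 3/4" | "3/4 < t" by linarith
    then show ?thesis
    proof cases
      case 1
      then have "\<phi> t = t/2" by (auto simp: \<phi>_def)
      then show ?thesis using 1 by (simp only:) (simp add: pjoin_def)
    next
      case 2
      then have "\<phi> t = t - 1/4" by (auto simp: \<phi>_def)
      moreover have "2 * (2 * (t - 1/4)) - 1 = 2 * (2 * t - 1)" by (simp add: algebra_simps)
      ultimately show ?thesis using 2 by (simp only:) (simp add: pjoin_def)
    next
      case 3
      then have "\<phi> t = 2 * t - 1" by (auto simp: \<phi>_def)
      then show ?thesis using 3 by (simp only:) (simp add: pjoin_def)
    qed
  qed
  moreover have "dipath X le (pjoin (pjoin a b) c)"
    using dipath_pjoin[OF pos dipath_pjoin[OF pos a b ab] c] bc by (simp add: pjoin_def)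
  ultimately show ?thesis by (intro reparam_relI) auto
qed

lemma reparam_rel_pjoin_const_left: "dipath X le p \<Longrightarrow> reparam_rel X le p (pjoin (\<lambda>t. p 0) p)"
  by (rule reparam_relI[where \<phi> = "\<lambda>t. max 0 (2 * t - 1)"])
    (auto intro!: reparamI continuous_intros simp: pjoin_def)

lemma reparam_rel_pjoin_const_right: "dipath X le p \<Longrightarrow> reparam_rel X le p (pjoin p (\<lambda>t. p 1))"
  by (rule reparam_relI[where \<phi> = "\<lambda>t. min 1 (2 * t)"])
    (auto intro!: reparamI continuous_intros simp: pjoin_def)

section \<open>Cancellation of traces\<close>

definition preverse :: "(real \<Rightarrow> 'a) \<Rightarrow> real \<Rightarrow> 'a" where
  "preverse p = (\<lambda>t. p (1 - t))"

lemma preverse_preverse [simp]: "preverse (preverse p) = p"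
  by (simp add: preverse_def)

lemma preverse_pjoin:
  assumes "p 1 = q 0"
  shows "preverse (pjoin p q) = pjoin (preverse q) (preverse p)"
proof
  fix t :: real
  show "preverse (pjoin p q) t = pjoin (preverse q) (preverse p) t"
  proof (cases "t = 1/2")
    case True
    show ?thesis unfolding True using assms by (simp add: preverse_def pjoin_def)
  qed (auto simp: preverse_def pjoin_def)
qed

lemma dipath_preverse:
  assumes p: "dipath X le p"
  shows "dipath X (\<lambda>x y. le y x) (preverse p)"
proof -
  have "continuous_map (top_of_set {0..1}) X (preverse p)"
    unfolding preverse_def
    by (rule continuous_map_compose_on) (use p in \<open>auto simp: dipath_def intro!: continuous_intros\<close>)
  moreover have "le (p (1 - t)) (p (1 - s))" if "0 \<le> s" "s \<le> t" "t \<le> 1" for s t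
    by (rule dipath_mono[OF p]) (use that in auto)
  ultimately show ?thesis unfolding dipath_def preverse_def by blast
qed

lemma reparam_rel_preverse:
  assumes "reparam_rel X le p q"
  shows "reparam_rel X (\<lambda>x y. le y x) (preverse p) (preverse q)"
proof -
  obtain \<phi> where p: "dipath X le p" "dipath X le q" and \<phi>: "reparam \<phi>"
    and q: "\<And>t. t \<in> {0..1} \<Longrightarrow> q t = p (\<phi> t)"
    by (rule reparam_relE[OF assms]) blast
  have "reparam (\<lambda>t. 1 - \<phi> (1 - t))"
  proof (rule reparamI)
    show "continuous_on {0..1} (\<lambda>t. 1 - \<phi> (1 - t))"
      by (intro continuous_intros continuous_on_compose2[OF reparamD(1)[OF \<phi>]]) auto
    show "0 \<le> 1 - \<phi> (1 - t) \<and> 1 - \<phi> (1 - t) \<le> 1" if "0 \<le> t" "t \<le> 1" for t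
      using that reparamD(2,3)[OF \<phi>, of "1 - t"] by simp
    show "1 - \<phi> (1 - s) \<le> 1 - \<phi> (1 - t)" if "0 \<le> s" "s \<le> t" "t \<le> 1" for s t
      using that reparamD(4)[OF \<phi>, of "1 - t" "1 - s"] by simp
  qed (simp_all add: reparamD(5,6)[OF \<phi>])
  moreover have "preverse q t = preverse p (1 - \<phi> (1 - t))" if "t \<in> {0..1}" for t
    using that q[of "1 - t"] by (simp add: preverse_def)
  ultimately show ?thesis by (rule reparam_relI[OF dipath_preverse[OF p(1)]])
qed

lemma same_trace_preverse:
  assumes "same_trace X le p q"
  shows "same_trace X (\<lambda>x y. le y x) (preverse p) (preverse q)"
  by (rule equivclp_map[where I = "\<lambda>_. True" and F = preverse, OF assms])
    (simp_all add: reparam_rel_preverse)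

definition last_below :: "('a \<Rightarrow> 'a \<Rightarrow> bool) \<Rightarrow> (real \<Rightarrow> 'a) \<Rightarrow> 'a \<Rightarrow> real" where
  "last_below le p a = Sup {t \<in> {0..1}. le (p t) a}"

definition ptrunc :: "('a \<Rightarrow> 'a \<Rightarrow> bool) \<Rightarrow> (real \<Rightarrow> 'a) \<Rightarrow> 'a \<Rightarrow> real \<Rightarrow> 'a" where
  "ptrunc le p a = (\<lambda>t. p (min t (last_below le p a)))"

lemma closed_below_times:
  assumes pos: "pospace X le" and p: "dipath X le p" and a: "a \<in> topspace X"
  shows "closed {t \<in> {0..1}. le (p t) a}"
proof -
  let ?G = "{(x, y). x \<in> topspace X \<and> y \<in> topspace X \<and> le x y}"
  have "continuous_map (top_of_set {0..1}) (prod_topology X X) (\<lambda>t. (p t, a))"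
    using p a by (intro continuous_map_pairedI) (auto simp: dipath_def)
  then have "closedin (top_of_set {0..1}) {t \<in> topspace (top_of_set {0..1}). (p t, a) \<in> ?G}"
    using closedin_continuous_map_preimage pospace_closedin[OF pos] by blast
  moreover have "{t \<in> topspace (top_of_set {0..1}). (p t, a) \<in> ?G} = {t \<in> {0..1}. le (p t) a}"
    using dipath_in_topspace[OF p] a by auto
  ultimately show ?thesis by (simp add: closedin_closed_trans)
qed

lemma last_below:
  assumes pos: "pospace X le" and p: "dipath X le p" and a: "a \<in> topspace X" and a0: "le (p 0) a"
  shows "0 \<le> last_below le p a" "last_below le p a \<le> 1"
    and "\<And>t. 0 \<le> t \<Longrightarrow> t \<le> 1 \<Longrightarrow> le (p t) a \<longleftrightarrow> t \<le> last_below le p a"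
proof -
  let ?S = "{t \<in> {0..1}. le (p t) a}"
  have bdd: "bdd_above ?S" by (rule bdd_aboveI[where M = 1]) auto
  have "Sup ?S \<in> ?S"
    using a0 by (intro closed_contains_Sup[OF _ bdd closed_below_times[OF pos p a]]) force
  then have b: "0 \<le> last_below le p a" "last_below le p a \<le> 1" "le (p (last_below le p a)) a"
    unfolding last_below_def by auto
  then show "0 \<le> last_below le p a" "last_below le p a \<le> 1" by auto
  show "le (p t) a \<longleftrightarrow> t \<le> last_below le p a" if t: "0 \<le> t" "t \<le> 1" for t
  proof
    assume "le (p t) a"
    then show "t \<le> last_below le p a"
      unfolding last_below_def using t by (intro cSup_upper[OF _ bdd]) auto
  next
    assume "t \<le> last_below le p a"
    then have "le (p t) (p (last_below le p a))" using t b by (intro dipath_mono[OF p])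
    moreover have "p t \<in> topspace X" "p (last_below le p a) \<in> topspace X"
      using dipath_in_topspace[OF p] t b by auto
    ultimately show "le (p t) a" using pospace_trans[OF pos _ _ a] b(3) by blast
  qed
qed

lemma dipath_ptrunc:
  assumes pos: "pospace X le" and p: "dipath X le p" and a: "a \<in> topspace X" and a0: "le (p 0) a"
  shows "dipath X le (ptrunc le p a)"
  unfolding ptrunc_def using last_below(1,2)[OF assms]
  by (intro dipath_compose[OF p]) (auto intro!: continuous_intros simp: mono_on_def)

text \<open>Truncating at a time instead of rescaling makes truncation commute with reparametrization:
  the truncation of p \<circ> \<phi> is the truncation of p, composed with the same \<phi>.\<close>

lemma reparam_rel_ptrunc:
  assumes pos: "pospace X le" and pq: "reparam_rel X le p q" and a: "a \<in> topspace X" and a0: "le (p 0) a"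
  shows "reparam_rel X le (ptrunc le p a) (ptrunc le q a)"
proof -
  obtain \<phi> where p: "dipath X le p" and q: "dipath X le q" and \<phi>: "reparam \<phi>"
    and q\<phi>: "\<And>t. t \<in> {0..1} \<Longrightarrow> q t = p (\<phi> t)"
    by (rule reparam_relE[OF pq]) blast
  define b where "b = last_below le p a"
  define c where "c = last_below le q a"
  have b: "0 \<le> b" "b \<le> 1" "\<And>t. 0 \<le> t \<Longrightarrow> t \<le> 1 \<Longrightarrow> le (p t) a \<longleftrightarrow> t \<le> b"
    using last_below[OF pos p a a0] unfolding b_def by auto
  have c: "0 \<le> c" "c \<le> 1" "\<And>t. 0 \<le> t \<Longrightarrow> t \<le> 1 \<Longrightarrow> le (q t) a \<longleftrightarrow> t \<le> c"
    using last_below[OF pos q a] a0 reparam_relD[OF pq] unfolding c_def by auto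
  have below: "t \<le> c \<longleftrightarrow> \<phi> t \<le> b" if "0 \<le> t" "t \<le> 1" for t
    using that b(3)[of "\<phi> t"] c(3)[of t] q\<phi>[of t] reparamD(2,3)[OF \<phi>, of t] by auto
  have "\<phi> c = b"
  proof (rule antisym)
    show "\<phi> c \<le> b" using below[of c] c(1,2) by simp
    obtain s where s: "0 \<le> s" "s \<le> 1" "\<phi> s = b"
      using IVT'[of \<phi> 0 b 1] reparamD(1,5,6)[OF \<phi>] b by auto
    then have "s \<le> c" using below by simp
    then show "b \<le> \<phi> c" using reparamD(4)[OF \<phi> s(1) _ c(2)] s by simp
  qed
  have "ptrunc le q a t = ptrunc le p a (\<phi> t)" if t: "t \<in> {0..1}" for t
  proof -
    have "\<phi> (min t c) = min (\<phi> t) b"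
      using t c reparamD(4)[OF \<phi>, of t c] reparamD(4)[OF \<phi>, of c t] \<open>\<phi> c = b\<close>
      by (cases "t \<le> c") (auto simp: min_def)
    then show ?thesis using t c q\<phi>[of "min t c"] by (simp add: ptrunc_def b_def c_def)
  qed
  then show ?thesis by (rule reparam_relI[OF dipath_ptrunc[OF pos p a a0] \<phi>])
qed

lemma same_trace_ptrunc:
  assumes pos: "pospace X le" and pq: "same_trace X le p q" and a: "a \<in> topspace X" and a0: "le (p 0) a"
  shows "same_trace X le (ptrunc le p a) (ptrunc le q a)"
proof (rule equivclp_map[where F = "\<lambda>p. ptrunc le p a" and I = "\<lambda>p. le (p 0) a", OF pq a0])
  show "le (p 0) a \<longleftrightarrow> le (q 0) a" if "reparam_rel X le p q" for p q
    using reparam_relD[OF that] by simp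
  show "reparam_rel X le (ptrunc le p a) (ptrunc le q a)" if "reparam_rel X le p q" "le (p 0) a" for p q
    using reparam_rel_ptrunc[OF pos that(1) a that(2)] .
qed

lemma reparam_rel_ptrunc_pjoin:
  assumes pos: "pospace X le" and v: "dipath X le v" and g: "dipath X le g" and vg: "v 1 = g 0"
  shows "reparam_rel X le v (ptrunc le (pjoin v g) (v 1))"
proof -
  define P where "P = pjoin v g"
  define b where "b = last_below le P (v 1)"
  have P: "dipath X le P" "P 0 = v 0" "P (1/2) = v 1"
    using dipath_pjoin[OF pos v g vg] unfolding P_def by (simp_all add: pjoin_def)
  have a: "v 1 \<in> topspace X" "le (P 0) (v 1)"
    using dipath_in_topspace[OF v] dipath_mono[OF v, of 0 1] P(2) by auto
  have b: "0 \<le> b" "b \<le> 1" "\<And>t. 0 \<le> t \<Longrightarrow> t \<le> 1 \<Longrightarrow> le (P t) (v 1) \<longleftrightarrow> t \<le> b"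
    using last_below[OF pos P(1) a] unfolding b_def by auto
  have "1/2 \<le> b" using b(3)[of "1/2"] P(3) pospace_refl[OF pos a(1)] by simp
  have "ptrunc le P (v 1) t = v (min 1 (2 * t))" if t: "t \<in> {0..1}" for t
  proof (cases "t \<le> 1/2")
    case True
    then have "ptrunc le P (v 1) t = P t"
      using \<open>1/2 \<le> b\<close> by (simp add: ptrunc_def b_def[symmetric] min_absorb1)
    then show ?thesis using True by (simp add: P_def pjoin_def)
  next
    case False
    have "P (min t b) = v 1"
    proof (rule pospace_antisym[OF pos])
      show "P (min t b) \<in> topspace X" using dipath_in_topspace[OF P(1)] t b by auto
      show "le (P (min t b)) (v 1)" using b t by simp
      show "le (v 1) (P (min t b))"
        using dipath_mono[OF P(1), of "1/2" "min t b"] P(3) False \<open>1/2 \<le> b\<close> t by simp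
    qed (use a in simp)
    then show ?thesis using False by (simp add: ptrunc_def b_def[symmetric])
  qed
  then have "reparam_rel X le v (ptrunc le P (v 1))"
    by (intro reparam_relI[OF v, where \<phi> = "\<lambda>t. min 1 (2 * t)"])
      (auto intro!: reparamI continuous_intros)
  then show ?thesis unfolding P_def .
qed

lemma same_trace_pjoin_cancel_left:
  assumes pos: "pospace X le" and v: "dipath X le v" "dipath X le v'"
    and g: "dipath X le g" "dipath X le g'"
    and vg: "v 1 = g 0" "v' 1 = g' 0" and vv': "v 1 = v' 1"
    and E: "same_trace X le (pjoin v g) (pjoin v' g')"
  shows "same_trace X le v v'"
proof -
  have "v 1 \<in> topspace X" "le (pjoin v g 0) (v 1)"
    using dipath_in_topspace[OF v(1)] dipath_mono[OF v(1), of 0 1] by (auto simp: pjoin_def)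
  then have "same_trace X le (ptrunc le (pjoin v g) (v 1)) (ptrunc le (pjoin v' g') (v' 1))"
    using same_trace_ptrunc[OF pos E] vv' by simp
  then show ?thesis
    using reparam_rel_ptrunc_pjoin[OF pos v(1) g(1) vg(1)]
        reparam_rel_ptrunc_pjoin[OF pos v(2) g(2) vg(2)]
    by (blast intro: equivclp_trans equivclp_sym)
qed

lemma same_trace_pjoin_cancel_right:
  assumes pos: "pospace X le" and g: "dipath X le g" "dipath X le g'"
    and u: "dipath X le u" "dipath X le u'"
    and gu: "g 1 = u 0" "g' 1 = u' 0" and uu': "u 0 = u' 0"
    and E: "same_trace X le (pjoin g u) (pjoin g' u')"
  shows "same_trace X le u u'"
proof -
  have E': "same_trace X (\<lambda>x y. le y x) (pjoin (preverse u) (preverse g))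
      (pjoin (preverse u') (preverse g'))"
    using same_trace_preverse[OF E] by (simp add: preverse_pjoin gu)
  have "same_trace X (\<lambda>x y. le y x) (preverse u) (preverse u')"
    by (rule same_trace_pjoin_cancel_left[OF pospace_converse[OF pos] dipath_preverse[OF u(1)]
          dipath_preverse[OF u(2)] dipath_preverse[OF g(1)] dipath_preverse[OF g(2)] _ _ _ E'])
      (use gu uu' in \<open>simp_all add: preverse_def\<close>)
  from same_trace_preverse[OF this] show ?thesis by simp
qed

section \<open>The trace category\<close>

lemma composable_tracesE:
  assumes "A \<in> traces X le" "B \<in> traces X le" "ttgt A = tsrc B"
  obtains a b where "dipath X le a" "dipath X le b"
    "A = trace_of X le a" "B = trace_of X le b" "a 1 = b 0"
proof -
  obtain a b where "dipath X le a" "A = trace_of X le a" "dipath X le b" "B = trace_of X le b"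
    using assms(1,2) by (meson tracesE)
  then show ?thesis using that assms(3) by (simp add: tsrc_trace_of ttgt_trace_of)
qed

lemma tsrc_in_topspace: "A \<in> traces X le \<Longrightarrow> tsrc A \<in> topspace X"
  and ttgt_in_topspace: "A \<in> traces X le \<Longrightarrow> ttgt A \<in> topspace X"
  by (auto elim!: tracesE simp: tsrc_trace_of ttgt_trace_of dipath_in_topspace)

lemma tcat_in_traces:
  assumes pos: "pospace X le" and "A \<in> traces X le" "B \<in> traces X le" "ttgt A = tsrc B"
  shows "tcat X le A B \<in> traces X le" "tsrc (tcat X le A B) = tsrc A" "ttgt (tcat X le A B) = ttgt B"
proof -
  obtain a b where ab: "dipath X le a" "dipath X le b"
    "A = trace_of X le a" "B = trace_of X le b" "a 1 = b 0"
    using assms(2-4) by (rule composable_tracesE)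
  then have "tcat X le A B = trace_of X le (pjoin a b)" "dipath X le (pjoin a b)"
    using tcat_trace_of[OF pos] dipath_pjoin[OF pos] by auto
  then show "tcat X le A B \<in> traces X le" "tsrc (tcat X le A B) = tsrc A" "ttgt (tcat X le A B) = ttgt B"
    using ab by (simp_all add: trace_of_in_traces tsrc_trace_of ttgt_trace_of pjoin_def)
qed

lemma tcat_assoc:
  assumes pos: "pospace X le" and A: "A \<in> traces X le" and B: "B \<in> traces X le" and C: "C \<in> traces X le"
    and AB: "ttgt A = tsrc B" and BC: "ttgt B = tsrc C"
  shows "tcat X le (tcat X le A B) C = tcat X le A (tcat X le B C)"
proof -
  obtain a b where ab: "dipath X le a" "dipath X le b"
    "A = trace_of X le a" "B = trace_of X le b" "a 1 = b 0"
    using A B AB by (rule composable_tracesE)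
  obtain c where c: "dipath X le c" "C = trace_of X le c" "b 1 = c 0"
    using C BC ab by (metis tracesE tsrc_trace_of ttgt_trace_of)
  have ab_c: "dipath X le (pjoin a b)" "pjoin a b 1 = c 0"
    using dipath_pjoin[OF pos ab(1,2,5)] c(3) by (simp_all add: pjoin_def)
  have a_bc: "dipath X le (pjoin b c)" "a 1 = pjoin b c 0"
    using dipath_pjoin[OF pos ab(2) c(1,3)] ab(5) by (simp_all add: pjoin_def)
  have "tcat X le (tcat X le A B) C = trace_of X le (pjoin (pjoin a b) c)"
    using tcat_trace_of[OF pos ab(1,2,5)] tcat_trace_of[OF pos ab_c(1) c(1) ab_c(2)] ab c by simp
  also have "\<dots> = trace_of X le (pjoin a (pjoin b c))"
    unfolding trace_of_eq_iff using reparam_rel_pjoin_assoc[OF pos ab(1,2) c(1) ab(5) c(3)] by blast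
  also have "\<dots> = tcat X le A (tcat X le B C)"
    using tcat_trace_of[OF pos ab(2) c(1,3)] tcat_trace_of[OF pos ab(1) a_bc(1) a_bc(2)] ab c by simp
  finally show ?thesis .
qed

lemma tcat_const_left:
  assumes pos: "pospace X le" and A: "A \<in> traces X le"
  shows "tcat X le (trace_of X le (\<lambda>t. tsrc A)) A = A"
proof -
  obtain a where a: "dipath X le a" "A = trace_of X le a" using A by (rule tracesE)
  have "tcat X le (trace_of X le (\<lambda>t. a 0)) (trace_of X le a) = trace_of X le (pjoin (\<lambda>t. a 0) a)"
    using a dipath_const[OF pos dipath_in_topspace[OF a(1)]] by (simp add: tcat_trace_of[OF pos])
  also have "\<dots> = trace_of X le a"
    unfolding trace_of_eq_iff using reparam_rel_pjoin_const_left[OF a(1)] by blast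
  finally show ?thesis using a by (simp add: tsrc_trace_of)
qed

lemma tcat_const_right:
  assumes pos: "pospace X le" and A: "A \<in> traces X le"
  shows "tcat X le A (trace_of X le (\<lambda>t. ttgt A)) = A"
proof -
  obtain a where a: "dipath X le a" "A = trace_of X le a" using A by (rule tracesE)
  have "tcat X le (trace_of X le a) (trace_of X le (\<lambda>t. a 1)) = trace_of X le (pjoin a (\<lambda>t. a 1))"
    using a dipath_const[OF pos dipath_in_topspace[OF a(1)]] by (simp add: tcat_trace_of[OF pos])
  also have "\<dots> = trace_of X le a"
    unfolding trace_of_eq_iff using reparam_rel_pjoin_const_right[OF a(1)] by blast
  finally show ?thesis using a by (simp add: ttgt_trace_of)
qed

lemma category_trace_cat:
  assumes pos: "pospace X le"
  shows "category (trace_cat X le)"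
proof
  fix x assume "x \<in> Ob (trace_cat X le)"
  then have "dipath X le (\<lambda>t. x)" using dipath_const[OF pos] by (simp add: trace_cat_def)
  then show "Id (trace_cat X le) x \<in> Ar (trace_cat X le)"
    "Dom (trace_cat X le) (Id (trace_cat X le) x) = x" "Cod (trace_cat X le) (Id (trace_cat X le) x) = x"
    by (simp_all add: trace_cat_def trace_of_in_traces tsrc_trace_of ttgt_trace_of)
qed (auto simp: trace_cat_def tsrc_in_topspace ttgt_in_topspace tcat_in_traces[OF pos]
    tcat_const_left[OF pos] tcat_const_right[OF pos] tcat_assoc[OF pos])

lemma tcat_cancel_left:
  assumes pos: "pospace X le" and A: "A \<in> traces X le" "A' \<in> traces X le"
    and B: "B \<in> traces X le" "B' \<in> traces X le"
    and AB: "ttgt A = tsrc B" "ttgt A' = tsrc B'" and AA': "ttgt A = ttgt A'"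
    and E: "tcat X le A B = tcat X le A' B'"
  shows "A = A'"
proof -
  obtain a b where ab: "dipath X le a" "dipath X le b"
    "A = trace_of X le a" "B = trace_of X le b" "a 1 = b 0"
    using A(1) B(1) AB(1) by (rule composable_tracesE)
  obtain a' b' where ab': "dipath X le a'" "dipath X le b'"
    "A' = trace_of X le a'" "B' = trace_of X le b'" "a' 1 = b' 0"
    using A(2) B(2) AB(2) by (rule composable_tracesE)
  have "same_trace X le (pjoin a b) (pjoin a' b')"
    using E ab ab' by (simp add: tcat_trace_of[OF pos] trace_of_eq_iff)
  moreover have "a 1 = a' 1" using AA' ab ab' by (simp add: ttgt_trace_of)
  ultimately have "same_trace X le a a'"
    using same_trace_pjoin_cancel_left[OF pos ab(1) ab'(1) ab(2) ab'(2) ab(5) ab'(5)] by blast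
  then show ?thesis using ab ab' by (simp add: trace_of_eq_iff)
qed

lemma tcat_cancel_right:
  assumes pos: "pospace X le" and A: "A \<in> traces X le" "A' \<in> traces X le"
    and B: "B \<in> traces X le" "B' \<in> traces X le"
    and AB: "ttgt A = tsrc B" "ttgt A' = tsrc B'" and BB': "tsrc B = tsrc B'"
    and E: "tcat X le A B = tcat X le A' B'"
  shows "B = B'"
proof -
  obtain a b where ab: "dipath X le a" "dipath X le b"
    "A = trace_of X le a" "B = trace_of X le b" "a 1 = b 0"
    using A(1) B(1) AB(1) by (rule composable_tracesE)
  obtain a' b' where ab': "dipath X le a'" "dipath X le b'"
    "A' = trace_of X le a'" "B' = trace_of X le b'" "a' 1 = b' 0"
    using A(2) B(2) AB(2) by (rule composable_tracesE)
  have "same_trace X le (pjoin a b) (pjoin a' b')"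
    using E ab ab' by (simp add: tcat_trace_of[OF pos] trace_of_eq_iff)
  moreover have "b 0 = b' 0" using BB' ab ab' by (simp add: tsrc_trace_of)
  ultimately have "same_trace X le b b'"
    using same_trace_pjoin_cancel_right[OF pos ab(1) ab'(1) ab(2) ab'(2) ab(5) ab'(5)] by blast
  then show ?thesis using ab ab' by (simp add: trace_of_eq_iff)
qed

lemma unique_factorization_trace_cat:
  assumes pos: "pospace X le"
  shows "unique_factorization_category (trace_cat X le)"
proof (rule unique_factorization_category.intro[OF category_trace_cat[OF pos]], unfold_locales)
  fix f g uv uv'
  assume f: "f \<in> Ar (trace_cat X le)" and "uv \<in> factorizations (trace_cat X le) f g"
    and "uv' \<in> factorizations (trace_cat X le) f g"
  then obtain u v u' v' where uv: "uv = (u, v)" "uv' = (u', v')"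
    and T: "u \<in> traces X le" "v \<in> traces X le" "u' \<in> traces X le" "v' \<in> traces X le"
    and ends: "tsrc u = ttgt f" "ttgt v = tsrc f" "tsrc u' = ttgt f" "ttgt v' = tsrc f"
    and g: "g = tcat X le (tcat X le v f) u" "g = tcat X le (tcat X le v' f) u'"
    by (auto simp: factorizations_def trace_cat_def)
  have f: "f \<in> traces X le" using f by (simp add: trace_cat_def)
  have E: "tcat X le (tcat X le v f) u = tcat X le (tcat X le v' f) u'" using g by simp
  have vf: "tcat X le v f \<in> traces X le" "ttgt (tcat X le v f) = ttgt f"
    and v'f: "tcat X le v' f \<in> traces X le" "ttgt (tcat X le v' f) = ttgt f"
    using tcat_in_traces[OF pos T(2) f ends(2)] tcat_in_traces[OF pos T(4) f ends(4)] by auto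
  have "u = u'"
    by (rule tcat_cancel_right[OF pos vf(1) v'f(1) T(1,3) _ _ _ E]) (use vf v'f ends in simp_all)
  have fu: "tcat X le f u \<in> traces X le" "tsrc (tcat X le f u) = tsrc f"
    using tcat_in_traces[OF pos f T(1)] ends(1) by auto
  have E': "tcat X le v (tcat X le f u) = tcat X le v' (tcat X le f u)"
    using E \<open>u = u'\<close> tcat_assoc[OF pos T(2) f T(1) ends(2) ends(1)[symmetric]]
      tcat_assoc[OF pos T(4) f T(1) ends(4) ends(1)[symmetric]]
    by simp
  have "v = v'"
    by (rule tcat_cancel_left[OF pos T(2,4) fu(1) fu(1) _ _ _ E']) (use fu ends in simp_all)
  with \<open>u = u'\<close> show "uv = uv'" using uv by simp
qed

lemma trace_le_eq_factor_le: "trace_le X le = factor_le (trace_cat X le)"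
proof (intro ext iffI)
  fix f g
  assume "trace_le X le f g"
  then obtain u v where "u \<in> traces X le" "v \<in> traces X le" "ttgt u = tsrc f" "ttgt f = tsrc v"
    "g = tcat X le (tcat X le u f) v"
    unfolding trace_le_def by blast
  then have "(v, u) \<in> factorizations (trace_cat X le) f g"
    by (simp add: factorizations_def trace_cat_def)
  then show "factor_le (trace_cat X le) f g" unfolding factor_le_def by blast
next
  fix f g
  assume "factor_le (trace_cat X le) f g"
  then obtain v u where "(v, u) \<in> factorizations (trace_cat X le) f g"
    unfolding factor_le_def by auto
  then have "u \<in> traces X le" "v \<in> traces X le" "ttgt u = tsrc f" "ttgt f = tsrc v"
    "g = tcat X le (tcat X le u f) v"
    by (auto simp: factorizations_def trace_cat_def)
  then show "trace_le X le f g"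
    unfolding trace_le_def by blast
qed

theorem proposition5p3:
  fixes X :: "'a topology" and le :: "'a \<Rightarrow> 'a \<Rightarrow> bool"
  assumes "pospace X le"
  shows "cat_iso (poset_cat (traces X le) (trace_le X le)) (fact_cat (trace_cat X le))"
proof -
  interpret unique_factorization_category "trace_cat X le"
    by (rule unique_factorization_trace_cat[OF assms])
  have "Ar (trace_cat X le) = traces X le"
    by (simp add: trace_cat_def)
  then show ?thesis
    using cat_iso_factor_poset_fact_cat by (simp add: trace_le_eq_factor_le)
qed

end
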